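(* Let $(w_i)_{i\in[n]}$ be positive weights, $W_n=w_I$ with $I$ uniform on $[n]$, $\beta\ge0$, $h\in\mathbb R$, and let $\sigma$ be distributed according to $$\mu_n(\sigma)=\frac{1}{Z_n}\exp\Big(\frac{\beta}{2n\mathbb E[W_n]}\Big(\sum_iw_i\sigma_i\Big)^2+h\sum_i\sigma_i\Big),\quad\sigma\in\{-1,1\}^n.$$ Define $$c_n(s)=\frac1n\log\mathbb E\Big[\exp\Big(s\sqrt{\tfrac{\beta}{\mathbb E[W_n]}}\sum_{i\in[n]}w_i\sigma_i\Big)\Big],$$ $$G_n(x;s)=\frac{x^2}{2}-\mathbb E\Big[\log\cosh\Big(\sqrt{\tfrac{\beta}{\mathbb E[W_n]}}W_n(x+s)+h\Big)\Big],\qquad G_n(x)=G_n(x;0).$$ Then for any constant $a\in\mathbb R$, $$c_n(s)=\frac1n\log\frac{\int_{-\infty}^\infty e^{-nG_n(\frac{x}{\sqrt n}+a;s)}\,dx}{\int_{-\infty}^\infty e^{-nG_n(\frac{x}{\sqrt n}+a)}\,dx}.$$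
   Context: In $c_n$ the expectation is under $\mu_n$; in $G_n$ the expectation is over $W_n$, i.e. $\frac1n\sum_i f(w_i)$. *)

theory Defs
  imports "HOL-Analysis.Analysis"
begin

definition spins :: "nat \<Rightarrow> (nat \<Rightarrow> real) set" where
  "spins n = PiE {..<n} (\<lambda>_. {-1, 1})"

text \<open>E[W_n] with W_n = w_I, I uniform on [n].\<close>
definition EW :: "nat \<Rightarrow> (nat \<Rightarrow> real) \<Rightarrow> real" where
  "EW n w = (\<Sum>i<n. w i) / real n"

definition gibbs_weight :: "nat \<Rightarrow> (nat \<Rightarrow> real) \<Rightarrow> real \<Rightarrow> real \<Rightarrow> (nat \<Rightarrow> real) \<Rightarrow> real" where
  "gibbs_weight n w \<beta> h \<sigma> =
     exp (\<beta> / (2 * real n * EW n w) * (\<Sum>i<n. w i * \<sigma> i)^2 + h * (\<Sum>i<n. \<sigma> i))"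

definition Zn :: "nat \<Rightarrow> (nat \<Rightarrow> real) \<Rightarrow> real \<Rightarrow> real \<Rightarrow> real" where
  "Zn n w \<beta> h = (\<Sum>\<sigma>\<in>spins n. gibbs_weight n w \<beta> h \<sigma>)"

definition mu_expect :: "nat \<Rightarrow> (nat \<Rightarrow> real) \<Rightarrow> real \<Rightarrow> real \<Rightarrow> ((nat \<Rightarrow> real) \<Rightarrow> real) \<Rightarrow> real" where
  "mu_expect n w \<beta> h f = (\<Sum>\<sigma>\<in>spins n. gibbs_weight n w \<beta> h \<sigma> * f \<sigma>) / Zn n w \<beta> h"

definition c_n :: "nat \<Rightarrow> (nat \<Rightarrow> real) \<Rightarrow> real \<Rightarrow> real \<Rightarrow> real \<Rightarrow> real" where
  "c_n n w \<beta> h s = (1 / real n) *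
     ln (mu_expect n w \<beta> h (\<lambda>\<sigma>. exp (s * sqrt (\<beta> / EW n w) * (\<Sum>i<n. w i * \<sigma> i))))"

text \<open>G_n(x;s); the expectation over W_n is the empirical average over i.\<close>
definition G_n :: "nat \<Rightarrow> (nat \<Rightarrow> real) \<Rightarrow> real \<Rightarrow> real \<Rightarrow> real \<Rightarrow> real \<Rightarrow> real" where
  "G_n n w \<beta> h x s = x^2 / 2 -
     (\<Sum>i<n. ln (cosh (sqrt (\<beta> / EW n w) * w i * (x + s) + h))) / real n"

end

theory Submission
  imports Defs "HOL-Probability.Probability"
begin

text \<open>By the Hubbard-Stratonovich transform, the Gibbs factor
  \<open>exp (g\<^sup>2 M\<^sup>2 / (2n))\<close> with \<open>M = \<Sum>\<^sub>i w\<^sub>i \<sigma>\<^sub>i\<close> and \<open>g = \<surd>(\<beta> / E[W\<^sub>n])\<close>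
  is a Gaussian integral of \<open>exp (g M y)\<close>.
  Inside that integral the spins decouple, and summing over \<open>\<sigma>\<close> produces
  \<open>\<Prod>\<^sub>i 2 cosh (g w\<^sub>i (y + s) + h) = 2\<^sup>n exp (n y\<^sup>2/2 - n G\<^sub>n(y;s))\<close>.
  So the tilted partition function and \<open>Z\<^sub>n\<close> are the same multiple of
  \<open>\<integral> exp (-n G\<^sub>n(y;s)) dy\<close> and \<open>\<integral> exp (-n G\<^sub>n(y;0)) dy\<close>; the multiple cancels in
  \<open>c\<^sub>n(s)\<close>, as does the factor \<open>\<surd>n\<close> from the substitution \<open>y = x/\<surd>n + a\<close>.\<close>

lemma has_bochner_integral_gaussian_exp_linear:
  fixes m c :: real
  assumes m: "m > 0"
  shows "has_bochner_integral lborel (\<lambda>y. exp (- m * y^2 / 2 + c * y))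
           (sqrt (2 * pi / m) * exp (c^2 / (2 * m)))"
proof -
  have density: "normal_density (c / m) (1 / sqrt m) y
      = sqrt (m / (2 * pi)) * exp (- m * (y - c / m)^2 / 2)" for y
    using m by (simp add: normal_density_def power_divide real_sqrt_divide)
  have completed_square: "exp (- m * y^2 / 2 + c * y)
      = sqrt (2 * pi / m) * exp (c^2 / (2 * m)) * normal_density (c / m) (1 / sqrt m) y" for y
  proof -
    have "- m * y^2 / 2 + c * y = c^2 / (2 * m) + (- m * (y - c / m)^2 / 2)"
      using m by (simp add: field_simps power2_eq_square)
    then have "exp (- m * y^2 / 2 + c * y) = exp (c^2 / (2 * m)) * exp (- m * (y - c / m)^2 / 2)"
      by (simp only: exp_add)
    also have "\<dots> = (sqrt (2 * pi / m) * sqrt (m / (2 * pi)))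
                     * (exp (c^2 / (2 * m)) * exp (- m * (y - c / m)^2 / 2))"
      using m by (simp add: real_sqrt_mult[symmetric])
    finally show ?thesis
      unfolding density by (simp only: ac_simps)
  qed
  have "has_bochner_integral lborel (normal_density (c / m) (1 / sqrt m)) 1"
    using m by (simp add: has_bochner_integral_iff)
  from has_bochner_integral_mult_right[OF this, of "sqrt (2 * pi / m) * exp (c^2 / (2 * m))"]
  show ?thesis
    unfolding completed_square by simp
qed

lemma sum_spins_exp_linear:
  "(\<Sum>\<sigma>\<in>spins n. exp (\<Sum>i<n. \<sigma> i * t i)) = (\<Prod>i<n. 2 * cosh (t i))"
proof -
  have "(\<Sum>\<sigma>\<in>spins n. exp (\<Sum>i<n. \<sigma> i * t i)) = (\<Sum>\<sigma>\<in>spins n. \<Prod>i<n. exp (\<sigma> i * t i))"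
    by (simp add: exp_sum)
  also have "\<dots> = (\<Prod>i<n. \<Sum>v\<in>{-1, 1}. exp (v * t i))"
    unfolding spins_def by (rule prod_sum_PiE[symmetric]) auto
  also have "\<dots> = (\<Prod>i<n. 2 * cosh (t i))"
  proof -
    have "(\<Sum>v\<in>{-1, 1}. exp (v * x)) = 2 * cosh x" for x :: real
      by (simp add: cosh_def scaleR_conv_of_real)
    then show ?thesis by simp
  qed
  finally show ?thesis .
qed

lemma spin_sum_hubbard_stratonovich:
  fixes w :: "nat \<Rightarrow> real" and g h s :: real
  assumes n: "n \<ge> 1"
  shows "has_bochner_integral lborel
     (\<lambda>y. exp (- real n * y^2 / 2) * (\<Prod>i<n. 2 * cosh (g * w i * (y + s) + h)))
     (sqrt (2 * pi / real n) * (\<Sum>\<sigma>\<in>spins n.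
        exp (g^2 / (2 * real n) * (\<Sum>i<n. w i * \<sigma> i)^2
             + s * g * (\<Sum>i<n. w i * \<sigma> i) + h * (\<Sum>i<n. \<sigma> i))))"
proof -
  define M where "M \<sigma> = (\<Sum>i<n. w i * \<sigma> i)" for \<sigma> :: "nat \<Rightarrow> real"
  define S where "S \<sigma> = (\<Sum>i<n. \<sigma> i)" for \<sigma> :: "nat \<Rightarrow> real"
  define F where "F \<sigma> y = exp (- real n * y^2 / 2 + g * M \<sigma> * y) * exp (s * g * M \<sigma> + h * S \<sigma>)"
    for \<sigma> y
  have n_pos: "real n > 0"
    using n by simp
  have "has_bochner_integral lborel (\<lambda>y. \<Sum>\<sigma>\<in>spins n. F \<sigma> y)
      (\<Sum>\<sigma>\<in>spins n. sqrt (2 * pi / real n) * exp ((g * M \<sigma>)^2 / (2 * real n))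
                     * exp (s * g * M \<sigma> + h * S \<sigma>))"
    unfolding F_def
    by (intro has_bochner_integral_sum has_bochner_integral_mult_left
        has_bochner_integral_gaussian_exp_linear n_pos)
  moreover have "(\<Sum>\<sigma>\<in>spins n. F \<sigma> y)
      = exp (- real n * y^2 / 2) * (\<Prod>i<n. 2 * cosh (g * w i * (y + s) + h))" for y
  proof -
    have "F \<sigma> y = exp (- real n * y^2 / 2) * exp (\<Sum>i<n. \<sigma> i * (g * w i * (y + s) + h))" for \<sigma>
    proof -
      have "(\<Sum>i<n. \<sigma> i * (g * w i * (y + s) + h)) = g * M \<sigma> * y + s * g * M \<sigma> + h * S \<sigma>"
        unfolding M_def S_def by (simp add: sum.distrib sum_distrib_left algebra_simps)
      then show ?thesis
        unfolding F_def by (simp add: exp_add[symmetric] algebra_simps)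
    qed
    then show ?thesis
      by (simp add: sum_distrib_left[symmetric] sum_spins_exp_linear)
  qed
  moreover have "(\<Sum>\<sigma>\<in>spins n. sqrt (2 * pi / real n) * exp ((g * M \<sigma>)^2 / (2 * real n))
                     * exp (s * g * M \<sigma> + h * S \<sigma>))
      = sqrt (2 * pi / real n) * (\<Sum>\<sigma>\<in>spins n.
          exp (g^2 / (2 * real n) * (M \<sigma>)^2 + s * g * M \<sigma> + h * S \<sigma>))"
    by (simp add: sum_distrib_left exp_add[symmetric] power_mult_distrib algebra_simps)
  ultimately show ?thesis
    unfolding M_def S_def by simp
qed

lemma EW_pos:
  assumes "n \<ge> 1" and "\<And>i. i < n \<Longrightarrow> w i > 0"
  shows "EW n w > 0"
  unfolding EW_def using assms
  by (intro divide_pos_pos sum_pos) (auto simp: lessThan_empty_iff)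

lemma exp_G_n:
  assumes "n \<ge> 1"
  shows "exp (- real n * G_n n w \<beta> h y s)
       = exp (- real n * y^2 / 2) * (\<Prod>i<n. cosh (sqrt (\<beta> / EW n w) * w i * (y + s) + h))"
proof -
  have "- real n * G_n n w \<beta> h y s
      = - real n * y^2 / 2 + (\<Sum>i<n. ln (cosh (sqrt (\<beta> / EW n w) * w i * (y + s) + h)))"
    unfolding G_n_def using assms by (simp add: field_simps)
  then have "exp (- real n * G_n n w \<beta> h y s)
      = exp (- real n * y^2 / 2) * exp (\<Sum>i<n. ln (cosh (sqrt (\<beta> / EW n w) * w i * (y + s) + h)))"
    by (simp only: exp_add)
  then show ?thesis
    by (simp add: exp_sum)
qed

lemma tilted_gibbs_sum_eq_integral:
  fixes w :: "nat \<Rightarrow> real" and \<beta> h s :: real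
  assumes n: "n \<ge> 1" and w: "\<And>i. i < n \<Longrightarrow> w i > 0" and \<beta>: "\<beta> \<ge> 0"
  shows "sqrt (2 * pi / real n) * (\<Sum>\<sigma>\<in>spins n.
           gibbs_weight n w \<beta> h \<sigma> * exp (s * sqrt (\<beta> / EW n w) * (\<Sum>i<n. w i * \<sigma> i)))
       = 2^n * (\<integral>y. exp (- real n * G_n n w \<beta> h y s) \<partial>lborel)"
proof -
  define g where "g = sqrt (\<beta> / EW n w)"
  have g_square: "g^2 / (2 * real n) = \<beta> / (2 * real n * EW n w)"
  proof -
    have "EW n w > 0"
      using n w by (rule EW_pos)
    then show ?thesis
      unfolding g_def using \<beta> by simp
  qed
  have "exp (- real n * y^2 / 2) * (\<Prod>i<n. 2 * cosh (g * w i * (y + s) + h))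
      = 2^n * exp (- real n * G_n n w \<beta> h y s)" for y
    unfolding exp_G_n[OF n] g_def by (simp add: prod.distrib)
  with spin_sum_hubbard_stratonovich[OF n, of g w s h]
  have "has_bochner_integral lborel (\<lambda>y. 2^n * exp (- real n * G_n n w \<beta> h y s))
     (sqrt (2 * pi / real n) * (\<Sum>\<sigma>\<in>spins n.
        gibbs_weight n w \<beta> h \<sigma> * exp (s * g * (\<Sum>i<n. w i * \<sigma> i))))"
    unfolding g_square gibbs_weight_def by (simp add: exp_add[symmetric] algebra_simps)
  then show ?thesis
    unfolding g_def by (simp add: has_bochner_integral_iff)
qed

lemma lborel_integral_shift_scale:
  fixes f :: "real \<Rightarrow> real" and a c :: real
  assumes "c > 0"
  shows "(\<integral>x. f (x / c + a) \<partial>lborel) = c * (\<integral>y. f y \<partial>lborel)"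
  using lborel_integral_real_affine[of "1 / c" f a] assms
  by (simp add: add.commute)

theorem lemma3p2:
  fixes n :: nat and w :: "nat \<Rightarrow> real" and \<beta> h s a :: real
  assumes "n \<ge> 1"
    and "\<And>i. i < n \<Longrightarrow> w i > 0"
    and "\<beta> \<ge> 0"
  shows "c_n n w \<beta> h s =
    (1 / real n) * ln (
      (\<integral>x. exp (- real n * G_n n w \<beta> h (x / sqrt (real n) + a) s) \<partial>lborel) /
      (\<integral>x. exp (- real n * G_n n w \<beta> h (x / sqrt (real n) + a) 0) \<partial>lborel))"
proof -
  define T where "T s' = (\<Sum>\<sigma>\<in>spins n.
      gibbs_weight n w \<beta> h \<sigma> * exp (s' * sqrt (\<beta> / EW n w) * (\<Sum>i<n. w i * \<sigma> i)))" for s'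
  define I where "I s' = (\<integral>y. exp (- real n * G_n n w \<beta> h y s') \<partial>lborel)" for s'
  have n_pos: "real n > 0"
    using assms(1) by simp
  have T_eq_I: "sqrt (2 * pi / real n) * T s' = 2^n * I s'" for s'
    unfolding T_def I_def by (rule tilted_gibbs_sum_eq_integral[OF assms])
  have shift: "(\<integral>x. exp (- real n * G_n n w \<beta> h (x / sqrt (real n) + a) s') \<partial>lborel)
      = sqrt (real n) * I s'" for s'
    unfolding I_def using n_pos by (intro lborel_integral_shift_scale) simp
  have "mu_expect n w \<beta> h (\<lambda>\<sigma>. exp (s * sqrt (\<beta> / EW n w) * (\<Sum>i<n. w i * \<sigma> i))) = T s / T 0"
    unfolding mu_expect_def Zn_def T_def by simp
  also have "\<dots> = (sqrt (2 * pi / real n) * T s) / (sqrt (2 * pi / real n) * T 0)"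
    using n_pos by simp
  also have "\<dots> = (sqrt (real n) * I s) / (sqrt (real n) * I 0)"
    unfolding T_eq_I using n_pos by simp
  finally show ?thesis
    unfolding c_n_def shift by simp
qed

end
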